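(* Let $M(k,l,m,n)=\langle x,y \mid y^m=x^l,\ x^n=1,\ y^{-1}xy=x^k\rangle$ be a metacyclic group, where $\gcd(n,k)=1$, $k^m\equiv 1 \pmod n$ and $l(k-1)\equiv 0\pmod n$. Let $I$ be a set of integers containing exactly one representative of each orbit of the action of $K=\langle y\rangle$ on $\mathbb{Z}/n$ given by $y\cdot u=ku$, and for $a\in I$ let $Ka=\{ak^i \bmod n: i\ge 0\}$. For $a,b,c\in I$ let $S(a,b,c)=|\{(r,s)\in Ka\times Kb : r+s\equiv c\pmod n\}|$. If $a,b,c\in I$ satisfy $S(a,b,c)\neq 0$, then $$\Big\{\frac{al}{n}\Big\}+\Big\{\frac{bl}{n}\Big\}-\Big\{\frac{cl}{n}\Big\}$$ is an integer, where $\{t\}$ denotes the fractional part of $t$. *)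

theory Defs
  imports Complex_Main "HOL-Number_Theory.Cong"
begin

definition orbitK :: "int \<Rightarrow> int \<Rightarrow> int \<Rightarrow> int set" where
  "orbitK n k a = {(a * k ^ i) mod n | i::nat. True}"

definition orbit_reps :: "int \<Rightarrow> int \<Rightarrow> int set \<Rightarrow> bool" where
  "orbit_reps n k I \<longleftrightarrow> (\<forall>u\<in>{0..<n}. \<exists>!a. a \<in> I \<and> a mod n \<in> orbitK n k u)"

definition S_count :: "int \<Rightarrow> int \<Rightarrow> int \<Rightarrow> int \<Rightarrow> int \<Rightarrow> nat" where
  "S_count n k a b c = card {(r, s). r \<in> orbitK n k a \<and> s \<in> orbitK n k b \<and> [r + s = c] (mod n)}"

end

theory Submission
  imports Defs
begin

text \<open>Since \<open>l k \<equiv> l (mod n)\<close>, multiplication by \<open>l\<close> is constant on each \<open>K\<close>-orbit modulo \<open>n\<close>.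
  A pair \<open>(r, s) \<in> Ka \<times> Kb\<close> with \<open>r + s \<equiv> c\<close> therefore gives \<open>al + bl \<equiv> cl (mod n)\<close>, and
  \<open>{x/n} + {y/n} - {z/n}\<close> differs from \<open>(x + y - z)/n\<close> by an integer.
  Only the hypothesis on \<open>l\<close> and the nonvanishing of \<open>S(a,b,c)\<close> are needed.\<close>

lemma cong_mult_power_self:
  fixes l k n :: int
  assumes "[l * (k - 1) = 0] (mod n)"
  shows "[l * k ^ i = l] (mod n)"
proof (induction i)
  case 0
  then show ?case by simp
next
  case (Suc i)
  have lk: "[l * k = l] (mod n)"
    using cong_add[OF assms cong_refl[of l]] by (simp add: algebra_simps)
  have "[l * k ^ Suc i = (l * k ^ i) * k] (mod n)"
    by (simp add: algebra_simps)
  also have "[(l * k ^ i) * k = l * k] (mod n)"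
    using Suc.IH by (intro cong_mult) auto
  finally show ?case
    using lk by (rule cong_trans)
qed

lemma cong_mult_orbitK:
  fixes l k n :: int
  assumes "[l * (k - 1) = 0] (mod n)" and "r \<in> orbitK n k a"
  shows "[l * r = l * a] (mod n)"
proof -
  obtain i where r: "r = (a * k ^ i) mod n"
    using assms(2) unfolding orbitK_def by auto
  have "[l * r = a * (l * k ^ i)] (mod n)"
    unfolding r by (simp add: cong_def mod_mult_right_eq ac_simps)
  also have "[a * (l * k ^ i) = a * l] (mod n)"
    using cong_mult_power_self[OF assms(1)] by (intro cong_mult) auto
  finally show ?thesis
    by (simp add: mult.commute)
qed

lemma S_count_nonzero_obtain:
  assumes "S_count n k a b c \<noteq> 0"
  obtains r s where "r \<in> orbitK n k a" "s \<in> orbitK n k b" "[r + s = c] (mod n)"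
proof -
  have "{(r, s). r \<in> orbitK n k a \<and> s \<in> orbitK n k b \<and> [r + s = c] (mod n)} \<noteq> {}"
    using assms unfolding S_count_def by force
  then show ?thesis
    using that by blast
qed

lemma cong_add_mult_of_S_count_nonzero:
  fixes l k n :: int
  assumes "[l * (k - 1) = 0] (mod n)" and "S_count n k a b c \<noteq> 0"
  shows "[a * l + b * l = c * l] (mod n)"
proof -
  obtain r s where rs: "r \<in> orbitK n k a" "s \<in> orbitK n k b" "[r + s = c] (mod n)"
    using S_count_nonzero_obtain[OF assms(2)] .
  have "[l * a + l * b = l * r + l * s] (mod n)"
    using cong_mult_orbitK[OF assms(1) rs(1)] cong_mult_orbitK[OF assms(1) rs(2)]
    by (intro cong_add) (auto simp: cong_sym)
  also have "[l * r + l * s = l * c] (mod n)"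
    using cong_mult[OF cong_refl[of l] rs(3)] by (simp add: distrib_left)
  finally show ?thesis
    by (simp add: mult.commute)
qed

lemma frac_add_diff_Ints_of_cong:
  fixes x y z n :: int
  assumes "n \<noteq> 0" and "[x + y = z] (mod n)"
  shows "frac (of_int x / of_int n) + frac (of_int y / of_int n) - frac (of_int z / of_int n)
           \<in> (\<int> :: real set)"
proof -
  obtain t where t: "x + y - z = n * t"
    using assms(2) by (metis cong_iff_dvd_diff dvdE)
  define q :: "int \<Rightarrow> real" where "q u = of_int u / of_int n" for u
  have "q x + q y - q z = of_int (x + y - z) / of_int n"
    unfolding q_def by (simp add: add_divide_distrib diff_divide_distrib)
  also have "\<dots> = of_int t"
    using assms(1) by (simp add: t)
  finally have "frac (q x) + frac (q y) - frac (q z) = of_int (t - \<lfloor>q x\<rfloor> - \<lfloor>q y\<rfloor> + \<lfloor>q z\<rfloor>)"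
    unfolding frac_def by simp
  then show ?thesis
    unfolding q_def by simp
qed

theorem mainTheorem2:
  fixes k l n :: int and m :: nat and I :: "int set" and a b c :: int
  assumes "n > 0"
    and "gcd n k = 1"
    and "[k ^ m = 1] (mod n)"
    and "[l * (k - 1) = 0] (mod n)"
    and "orbit_reps n k I"
    and "a \<in> I" and "b \<in> I" and "c \<in> I"
    and "S_count n k a b c \<noteq> 0"
  shows "frac (real_of_int (a * l) / real_of_int n) + frac (real_of_int (b * l) / real_of_int n)
           - frac (real_of_int (c * l) / real_of_int n) \<in> \<int>"
  using frac_add_diff_Ints_of_cong[OF _ cong_add_mult_of_S_count_nonzero[OF assms(4,9)]] assms(1)
  by simp

end
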